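(* Let $\lambda \vdash 2$ and $\hat{\lambda} \vdash 3$ be partitions such that the pair $(\lambda,\hat{\lambda})$ is not one of $((2),(3))$, $((2),(2\,1))$, $((1^2),(2\,1))$. Let $\mathfrak{r} \subset \mathbb{K}[\mathcal{S}_2]$ be a minimal right ideal of class $\lambda$ and $\hat{\mathfrak{r}} \subset \mathbb{K}[\mathcal{S}_3]$ a minimal right ideal of class $\hat{\lambda}$. Then for all $T \in \mathcal{T}_{\mathfrak{r}} \subseteq \mathcal{T}_2 V$ and all $\hat{T} \in \mathcal{T}_{\hat{\mathfrak{r}}} \subseteq \mathcal{T}_3 V$ we have $$y_{t'}^{\ast}(T\otimes \hat{T}) = 0 \quad\text{and}\quad y_{t'}^{\ast}(\hat{T}\otimes T) = 0 .$$ Consequently, nonzero algebraic covariant derivative curvature tensors of the form $y_{t'}^{\ast}(T\otimes\hat T)$ or $y_{t'}^{\ast}(\hat T\otimes T)$ with $T,\hat T$ in symmetry classes defined by minimal right ideals can only arise when the classes of these ideals are given by one of the three pairs $((2),(3))$, $((2),(2\,1))$, $((1^2),(2\,1))$.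
   Context: $\mathbb{K}=\mathbb{R}$ or $\mathbb{C}$; $V$ is a finite-dimensional $\mathbb{K}$-vector space and $\mathcal{T}_r V$ the space of $r$-times covariant tensors (multilinear maps $V^r\to\mathbb{K}$). For $T\in\mathcal{T}_2V$, $\hat T\in\mathcal{T}_3V$, $(T\otimes\hat T)(v_1,\dots,v_5)=T(v_1,v_2)\hat T(v_3,v_4,v_5)$ and $(\hat T\otimes T)(v_1,\dots,v_5)=\hat T(v_1,v_2,v_3)T(v_4,v_5)$. Permutations multiply by $(p\circ q)(i)=p(q(i))$. An element $a=\sum_{p\in\mathcal{S}_r}a(p)\,p$ of the group ring $\mathbb{K}[\mathcal{S}_r]$ acts on $T\in\mathcal{T}_rV$ by $(aT)(v_1,\dots,v_r)=\sum_p a(p)\,T(v_{p(1)},\dots,v_{p(r)})$, and $a^{\ast}:=\sum_p a(p)\,p^{-1}$. For a right ideal $\mathfrak{r}\subseteq\mathbb{K}[\mathcal{S}_r]$, the symmetry class is $\mathcal{T}_{\mathfrak{r}}=\{aT : a\in\mathfrak{r},\ T\in\mathcal{T}_rV\}$; if $e$ is a generating idempotent of $\mathfrak{r}$ then $\mathcal{T}_{\mathfrak r}=\{T: eT=T\}$. For a Young tableau $t$ with entries $1,\dots,r$, the Young symmetrizer is $y_t=\sum_{p\in\mathcal{H}_t}\sum_{q\in\mathcal{V}_t}\mathrm{sign}(q)\,p\circ q$, where $\mathcal{H}_t$ ($\mathcal{V}_t$) is the group of permutations preserving each row (column) of $t$. A minimal right ideal of $\mathbb{K}[\mathcal{S}_n]$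 is said to be of class $\lambda\vdash n$ if it is isomorphic (as right $\mathbb{K}[\mathcal{S}_n]$-module) to $y_t\,\mathbb{K}[\mathcal{S}_n]$ for a Young tableau $t$ of shape $\lambda$, equivalently if it lies in the minimal two-sided ideal of $\mathbb{K}[\mathcal{S}_n]$ corresponding to $\lambda$. Here $t'$ is the Young tableau with rows $(1,3,5)$ and $(2,4)$ (so columns $\{1,2\},\{3,4\},\{5\}$). An algebraic covariant derivative curvature tensor is a tensor $\mathfrak{R}'\in\mathcal{T}_5V$ with, for all $u,w,x,y,z\in V$: $\mathfrak R'(w,x,y,z,u)=-\mathfrak R'(w,x,z,y,u)=\mathfrak R'(y,z,w,x,u)$, $\mathfrak R'(w,x,y,z,u)+\mathfrak R'(w,y,z,x,u)+\mathfrak R'(w,z,x,y,u)=0$, and $\mathfrak R'(w,x,y,z,u)+\mathfrak R'(w,x,z,u,y)+\mathfrak R'(w,x,u,y,z)=0$. *)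

theory Defs
  imports Complex_Main "HOL-Combinatorics.Permutations" "HOL-Library.Function_Algebras"
begin

text \<open>Permutations of {1..r} (as maps nat => nat fixing everything outside {1..r}).
  Elements of the group ring K[S_r] are coefficient functions a with a p = 0 for
  p not in S_r; a = sum_p a(p) p.\<close>

type_synonym 'k grpring = "(nat \<Rightarrow> nat) \<Rightarrow> 'k"

definition perms :: "nat \<Rightarrow> (nat \<Rightarrow> nat) set" where
  "perms r = {p. p permutes {1..r}}"

definition group_ring :: "nat \<Rightarrow> ('k::zero) grpring set" where
  "group_ring r = {a. \<forall>p. p \<notin> perms r \<longrightarrow> a p = 0}"

definition gr_mult :: "nat \<Rightarrow> ('k::comm_ring_1) grpring \<Rightarrow> 'k grpring \<Rightarrow> 'k grpring" where
  "gr_mult r a b = (\<lambda>s. \<Sum>(p,q)\<in>{(p,q). p \<in> perms r \<and> q \<in> perms r \<and> p \<circ> q = s}. a p * b q)"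

definition star :: "nat \<Rightarrow> ('k::zero) grpring \<Rightarrow> 'k grpring" where
  "star r a = (\<lambda>s. if s \<in> perms r then a (inv s) else 0)"

definition right_ideal :: "nat \<Rightarrow> ('k::comm_ring_1) grpring set \<Rightarrow> bool" where
  "right_ideal r I \<longleftrightarrow> I \<subseteq> group_ring r \<and> 0 \<in> I \<and> (\<forall>x\<in>I. \<forall>y\<in>I. x + y \<in> I)
     \<and> (\<forall>x\<in>I. \<forall>b\<in>group_ring r. gr_mult r x b \<in> I)"

definition minimal_right_ideal :: "nat \<Rightarrow> ('k::comm_ring_1) grpring set \<Rightarrow> bool" where
  "minimal_right_ideal r I \<longleftrightarrow> right_ideal r I \<and> I \<noteq> {0}
     \<and> (\<forall>J. right_ideal r J \<and> J \<subseteq> I \<longrightarrow> J = {0} \<or> J = I)"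

text \<open>Isomorphism of right K[S_r]-modules (K-linearity follows from compatibility
  with right multiplication by the scalars c * id).\<close>
definition right_module_iso :: "nat \<Rightarrow> ('k::comm_ring_1) grpring set \<Rightarrow> 'k grpring set \<Rightarrow> bool" where
  "right_module_iso r I J \<longleftrightarrow> (\<exists>f. bij_betw f I J \<and> (\<forall>x\<in>I. \<forall>y\<in>I. f (x + y) = f x + f y)
     \<and> (\<forall>x\<in>I. \<forall>b\<in>group_ring r. f (gr_mult r x b) = gr_mult r (f x) b))"

definition partition_of :: "nat \<Rightarrow> nat list \<Rightarrow> bool" where
  "partition_of n lam \<longleftrightarrow> sum_list lam = n \<and> 0 \<notin> set lam \<and> sorted_wrt (\<ge>) lam"

text \<open>A Young tableau is given by its list of rows; it has shape lam and entries 1..n.\<close>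
definition tableau_of_shape :: "nat \<Rightarrow> nat list \<Rightarrow> nat list list \<Rightarrow> bool" where
  "tableau_of_shape n lam t \<longleftrightarrow> partition_of n lam \<and> map length t = lam
     \<and> distinct (concat t) \<and> set (concat t) = {1..n}"

definition tab_col :: "nat list list \<Rightarrow> nat \<Rightarrow> nat set" where
  "tab_col t j = {t ! i ! j | i. i < length t \<and> j < length (t ! i)}"

definition row_group :: "nat list list \<Rightarrow> (nat \<Rightarrow> nat) set" where
  "row_group t = {p \<in> perms (length (concat t)). \<forall>i < length t. p ` set (t ! i) = set (t ! i)}"

definition col_group :: "nat list list \<Rightarrow> (nat \<Rightarrow> nat) set" where
  "col_group t = {q \<in> perms (length (concat t)). \<forall>j. q ` tab_col t j = tab_col t j}"

definition young_sym :: "nat list list \<Rightarrow> ('k::comm_ring_1) grpring" where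
  "young_sym t = (\<lambda>s. \<Sum>(p,q)\<in>{(p,q). p \<in> row_group t \<and> q \<in> col_group t \<and> p \<circ> q = s}.
       of_int (sign q))"

definition of_class :: "nat \<Rightarrow> nat list \<Rightarrow> ('k::comm_ring_1) grpring set \<Rightarrow> bool" where
  "of_class n lam I \<longleftrightarrow> (\<exists>t. tableau_of_shape n lam t \<and>
      right_module_iso n I {gr_mult n (young_sym t) b | b. b \<in> group_ring n})"

definition t' :: "nat list list" where
  "t' = [[1,3,5],[2,4]]"

text \<open>V is the coordinate space 'n => 'k ('n finite).\<close>

definition tensors :: "nat \<Rightarrow> ((nat \<Rightarrow> 'n::finite \<Rightarrow> 'k::comm_ring_1) \<Rightarrow> 'k) set" where
  "tensors r = {T. (\<forall>v w. (\<forall>i\<in>{1..r}. v i = w i) \<longrightarrow> T v = T w)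
     \<and> (\<forall>i\<in>{1..r}. \<forall>v x y. T (v(i := x + y)) = T (v(i := x)) + T (v(i := y)))
     \<and> (\<forall>i\<in>{1..r}. \<forall>v x c. T (v(i := (\<lambda>j. c * x j))) = c * T (v(i := x)))}"

definition act :: "nat \<Rightarrow> ('k::comm_ring_1) grpring \<Rightarrow> ((nat \<Rightarrow> 'v) \<Rightarrow> 'k) \<Rightarrow> ((nat \<Rightarrow> 'v) \<Rightarrow> 'k)" where
  "act r a T = (\<lambda>v. \<Sum>p\<in>perms r. a p * T (v \<circ> p))"

definition symclass :: "nat \<Rightarrow> ('k::comm_ring_1) grpring set \<Rightarrow> ((nat \<Rightarrow> 'n::finite \<Rightarrow> 'k) \<Rightarrow> 'k) set" where
  "symclass r I = {act r a T | a T. a \<in> I \<and> T \<in> tensors r}"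

definition tprod23 :: "((nat \<Rightarrow> 'v) \<Rightarrow> 'k::times) \<Rightarrow> ((nat \<Rightarrow> 'v) \<Rightarrow> 'k) \<Rightarrow> ((nat \<Rightarrow> 'v) \<Rightarrow> 'k)" where
  "tprod23 T Th = (\<lambda>v. T v * Th (\<lambda>j. v (j + 2)))"

definition tprod32 :: "((nat \<Rightarrow> 'v) \<Rightarrow> 'k::times) \<Rightarrow> ((nat \<Rightarrow> 'v) \<Rightarrow> 'k) \<Rightarrow> ((nat \<Rightarrow> 'v) \<Rightarrow> 'k)" where
  "tprod32 Th T = (\<lambda>v. Th v * T (\<lambda>j. v (j + 3)))"

end

theory Submission
  imports Defs
begin

text \<open>Outside the excluded pairs the two classes are \<open>(2)\<close> or \<open>(1\<^sup>2)\<close> and \<open>(3)\<close> or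
  \<open>(1\<^sup>3)\<close>, and not both one-row. For a one-row (one-column) tableau \<open>y\<^sub>t = \<Sum>\<^sub>s \<chi>(s) s\<close> with
  \<open>\<chi>\<close> the trivial (sign) character, and \<open>y\<^sub>t \<bbbK>[S\<^sub>n]\<close> is the line it spans. An injective module
  map reflects the equations \<open>x s = \<chi>(s) x\<close>, so every right ideal isomorphic to it is again
  spanned by \<open>\<Sum>\<^sub>s \<chi>(s) s\<close>, and the tensors of its symmetry class are symmetric (alternating).
  The element \<open>y\<^sub>t\<^sub>'\<^sup>*\<close> acts by symmetrizing over the rows \<open>{1,3,5}\<close>, \<open>{2,4}\<close> and then
  alternating over the columns \<open>{1,2}\<close>, \<open>{3,4}\<close>; on a product of a symmetric or alternating
  2-tensor with a symmetric or alternating 3-tensor, at least one of them alternating, the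
  resulting 48 terms cancel.\<close>

lemma perms_finite [simp]: "finite (perms n)"
  unfolding perms_def by (rule finite_permutations) simp

lemma perms_id: "id \<in> perms n"
  unfolding perms_def by (simp add: permutes_id)

lemma perms_compose: "p \<in> perms n \<Longrightarrow> q \<in> perms n \<Longrightarrow> p \<circ> q \<in> perms n"
  unfolding perms_def by (simp add: permutes_compose)

lemma perms_inv: "p \<in> perms n \<Longrightarrow> inv p \<in> perms n"
  unfolding perms_def by (simp add: permutes_inv)

lemma perms_inv_o: "p \<in> perms n \<Longrightarrow> p \<circ> inv p = id" "p \<in> perms n \<Longrightarrow> inv p \<circ> p = id"
  unfolding perms_def by (simp_all add: permutes_inv_o)

lemma perms_inv_inv: "p \<in> perms n \<Longrightarrow> inv (inv p) = p"
  unfolding perms_def by (simp add: permutes_inv_inv)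

lemma perms_bij: "p \<in> perms n \<Longrightarrow> bij p"
  unfolding perms_def by (simp add: permutes_bij)

lemma perms_permutation: "p \<in> perms n \<Longrightarrow> permutation p"
  unfolding perms_def permutation_permutes by auto

lemma transpose_in_perms: "i \<in> {1..n} \<Longrightarrow> j \<in> {1..n} \<Longrightarrow> transpose i j \<in> perms n"
  unfolding perms_def by (simp add: permutes_swap_id)

lemma perms_compose_right_iff:
  assumes s: "s \<in> perms n"
  shows "u \<circ> s \<in> perms n \<longleftrightarrow> u \<in> perms n"
proof
  assume "u \<circ> s \<in> perms n"
  then have "u \<circ> s \<circ> inv s \<in> perms n"
    using perms_compose perms_inv s by blast
  then show "u \<in> perms n"
    using perms_inv_o(1)[OF s] by (simp add: comp_assoc)
qed (rule perms_compose[OF _ s])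

lemma perms_eq_id:
  assumes q: "q \<in> perms n" and fixed: "\<forall>x\<in>{1..n}. q x = x"
  shows "q = id"
proof
  fix x
  show "q x = id x"
    using fixed permutes_not_in[of q "{1..n}" x] q unfolding perms_def by (cases "x \<in> {1..n}") auto
qed

lemma sum_perms_compose_left: "\<tau> \<in> perms n \<Longrightarrow> (\<Sum>p\<in>perms n. h (\<tau> \<circ> p)) = (\<Sum>p\<in>perms n. h p)"
  using setum_permutations_compose_left[of \<tau> "{1..n}" h] unfolding perms_def by simp

lemma sum_reindex_inv:
  assumes "G \<subseteq> perms n" and "\<And>g. g \<in> G \<Longrightarrow> inv g \<in> G"
  shows "(\<Sum>g\<in>G. h (inv g)) = (\<Sum>g\<in>G. h g)"
  by (rule sum.reindex_bij_witness[where i=inv and j=inv])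
    (use assms perms_inv_inv in auto)

lemma gr_mult_pairs:
  "{(p, q). p \<in> perms n \<and> q \<in> perms n \<and> p \<circ> q = u}
     = (if u \<in> perms n then (\<lambda>q. (u \<circ> inv q, q)) ` perms n else {})"
proof (cases "u \<in> perms n")
  case True
  have "p \<in> perms n \<and> q \<in> perms n \<and> p \<circ> q = u \<longleftrightarrow> q \<in> perms n \<and> p = u \<circ> inv q" for p q
    using perms_inv_o[of q n] perms_compose[OF True perms_inv, of q]
    by (metis comp_assoc comp_id)
  then have "{(p, q). p \<in> perms n \<and> q \<in> perms n \<and> p \<circ> q = u} = {(p, q). q \<in> perms n \<and> p = u \<circ> inv q}"
    by simp
  also have "\<dots> = (\<lambda>q. (u \<circ> inv q, q)) ` perms n"
    by blast
  finally show ?thesis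
    using True by simp
next
  case False
  then show ?thesis
    using perms_compose by auto
qed

lemma gr_mult_apply:
  "gr_mult n a b u = (if u \<in> perms n then \<Sum>q\<in>perms n. a (u \<circ> inv q) * b q else 0)"
proof (cases "u \<in> perms n")
  case True
  have inj: "inj_on (\<lambda>q. (u \<circ> inv q, q)) (perms n)"
    by (rule inj_onI) simp
  show ?thesis
    unfolding gr_mult_def gr_mult_pairs if_P[OF True] sum.reindex[OF inj]
    by (simp only: comp_def prod.case)
qed (simp add: gr_mult_def gr_mult_pairs)

lemma gr_mult_in_group_ring: "gr_mult n a b \<in> group_ring n"
  unfolding group_ring_def by (simp add: gr_mult_apply)

definition perm_basis :: "(nat \<Rightarrow> nat) \<Rightarrow> ('k::comm_ring_1) grpring" where
  "perm_basis s = (\<lambda>p. if p = s then 1 else 0)"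

lemma perm_basis_in_group_ring: "s \<in> perms n \<Longrightarrow> perm_basis s \<in> group_ring n"
  unfolding perm_basis_def group_ring_def by auto

lemma gr_mult_perm_basis:
  assumes z: "z \<in> group_ring n" and s: "s \<in> perms n"
  shows "gr_mult n z (perm_basis s) = (\<lambda>u. z (u \<circ> inv s))"
proof
  fix u
  have "u \<circ> inv s \<notin> perms n" if "u \<notin> perms n"
    using that perms_compose_right_iff[OF perms_inv[OF s]] by blast
  then show "gr_mult n z (perm_basis s) u = z (u \<circ> inv s)"
    using z s unfolding gr_mult_apply perm_basis_def group_ring_def
    by (simp add: if_distrib cong: if_cong)
qed

abbreviation gen_right_ideal :: "nat \<Rightarrow> ('k::comm_ring_1) grpring \<Rightarrow> 'k grpring set" where
  "gen_right_ideal n a \<equiv> {gr_mult n a b | b. b \<in> group_ring n}"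

definition linear_char :: "nat \<Rightarrow> ((nat \<Rightarrow> nat) \<Rightarrow> 'k::comm_ring_1) \<Rightarrow> bool" where
  "linear_char n \<chi> \<longleftrightarrow> \<chi> id = 1 \<and> (\<forall>p\<in>perms n. \<forall>q\<in>perms n. \<chi> (p \<circ> q) = \<chi> p * \<chi> q)
     \<and> (\<forall>p\<in>perms n. \<chi> p = 1 \<or> \<chi> p = -1)"

lemma linear_char_mult: "linear_char n \<chi> \<Longrightarrow> p \<in> perms n \<Longrightarrow> q \<in> perms n \<Longrightarrow> \<chi> (p \<circ> q) = \<chi> p * \<chi> q"
  unfolding linear_char_def by blast

lemma linear_char_square: "linear_char n \<chi> \<Longrightarrow> p \<in> perms n \<Longrightarrow> \<chi> p * \<chi> p = 1"
  unfolding linear_char_def by auto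

lemma linear_char_inv:
  assumes \<chi>: "linear_char n \<chi>" and p: "p \<in> perms n"
  shows "\<chi> (inv p) = \<chi> p"
proof -
  have "\<chi> p * \<chi> (inv p) = 1"
    using linear_char_mult[OF \<chi> p perms_inv[OF p]] perms_inv_o(1)[OF p] \<chi>
    unfolding linear_char_def by simp
  then have "\<chi> p * (\<chi> p * \<chi> (inv p)) = \<chi> p"
    by simp
  then show ?thesis
    using linear_char_square[OF \<chi> p] by (simp add: mult.assoc[symmetric])
qed

lemma linear_char_one: "linear_char n (\<lambda>_. 1)"
  unfolding linear_char_def by simp

lemma linear_char_sign: "linear_char n (\<lambda>p. of_int (sign p) :: 'k::comm_ring_1)"
proof -
  have "\<forall>p\<in>perms n. (of_int (sign p) :: 'k) = 1 \<or> of_int (sign p) = -1"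
    by (simp add: sign_def)
  then show ?thesis
    unfolding linear_char_def by (simp add: sign_compose perms_permutation)
qed

definition char_elem :: "nat \<Rightarrow> ((nat \<Rightarrow> nat) \<Rightarrow> 'k::comm_ring_1) \<Rightarrow> 'k grpring" where
  "char_elem n \<chi> = (\<lambda>s. if s \<in> perms n then \<chi> s else 0)"

lemma gr_mult_char_elem:
  assumes \<chi>: "linear_char n \<chi>"
  shows "gr_mult n (char_elem n \<chi>) b = (\<lambda>u. (\<Sum>q\<in>perms n. \<chi> q * b q) * char_elem n \<chi> u)"
proof
  fix u
  have "char_elem n \<chi> (u \<circ> inv q) = \<chi> u * \<chi> q" if "u \<in> perms n" "q \<in> perms n" for q
    using that linear_char_mult[OF \<chi> that(1) perms_inv] linear_char_inv[OF \<chi>]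
    unfolding char_elem_def by (simp add: perms_compose perms_inv)
  then show "gr_mult n (char_elem n \<chi>) b u = (\<Sum>q\<in>perms n. \<chi> q * b q) * char_elem n \<chi> u"
    unfolding gr_mult_apply by (simp add: char_elem_def sum_distrib_left mult_ac cong: sum.cong)
qed

lemma gen_char_elem_mult_perm_basis:
  assumes \<chi>: "linear_char n \<chi>" and z: "z \<in> gen_right_ideal n (char_elem n \<chi>)"
    and s: "s \<in> perms n"
  shows "gr_mult n z (perm_basis s) = (\<lambda>u. \<chi> s * z u)"
proof -
  obtain c where zc: "z = (\<lambda>u. c * char_elem n \<chi> u)"
    using z gr_mult_char_elem[OF \<chi>] by blast
  have "char_elem n \<chi> (u \<circ> inv s) = \<chi> s * char_elem n \<chi> u" for u
    using perms_compose_right_iff[OF perms_inv[OF s], of u] s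
      linear_char_mult[OF \<chi> _ perms_inv[OF s], of u] linear_char_inv[OF \<chi> s]
    unfolding char_elem_def by (simp add: mult.commute)
  then have shift: "(\<lambda>u. z (u \<circ> inv s)) = (\<lambda>u. \<chi> s * z u)"
    unfolding zc by (simp add: mult.left_commute)
  have "z \<in> group_ring n"
    using z gr_mult_in_group_ring by blast
  then have "gr_mult n z (perm_basis s) = (\<lambda>u. z (u \<circ> inv s))"
    by (rule gr_mult_perm_basis[OF _ s])
  then show ?thesis
    unfolding shift .
qed

lemma right_ideal_iso_mult_perm_basis:
  assumes R: "right_ideal n R" and \<chi>: "linear_char n \<chi>"
    and iso: "right_module_iso n R (gen_right_ideal n (char_elem n \<chi>))"
    and x: "x \<in> R" and s: "s \<in> perms n"
  shows "gr_mult n x (perm_basis s) = (\<lambda>u. \<chi> s * x u)"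
proof -
  obtain f where bij: "bij_betw f R (gen_right_ideal n (char_elem n \<chi>))"
    and add: "\<And>x y. x \<in> R \<Longrightarrow> y \<in> R \<Longrightarrow> f (x + y) = f x + f y"
    and mult: "\<And>x b. x \<in> R \<Longrightarrow> b \<in> group_ring n \<Longrightarrow> f (gr_mult n x b) = gr_mult n (f x) b"
    using iso unfolding right_module_iso_def by blast
  have R0: "0 \<in> R" and R_add: "\<And>x y. x \<in> R \<Longrightarrow> y \<in> R \<Longrightarrow> x + y \<in> R"
    and R_mult: "\<And>x b. x \<in> R \<Longrightarrow> b \<in> group_ring n \<Longrightarrow> gr_mult n x b \<in> R"
    using R unfolding right_ideal_def by auto
  have inj: "inj_on f R"
    using bij by (simp add: bij_betw_def)
  have f0: "f 0 = 0"
    using add[OF R0 R0] by simp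
  let ?xs = "gr_mult n x (perm_basis s)"
  have xs: "?xs \<in> R"
    using R_mult[OF x perm_basis_in_group_ring[OF s]] .
  have f_xs: "f ?xs = (\<lambda>u. \<chi> s * f x u)"
    using mult[OF x perm_basis_in_group_ring[OF s]]
      gen_char_elem_mult_perm_basis[OF \<chi> bij_betw_apply[OF bij x] s] by simp
  consider "\<chi> s = 1" | "\<chi> s = -1"
    using \<chi> s unfolding linear_char_def by blast
  then show ?thesis
  proof cases
    case 1
    then have "f ?xs = f x"
      using f_xs by simp
    then show ?thesis
      using inj xs x 1 by (simp add: inj_on_eq_iff)
  next
    case 2
    then have "f (?xs + x) = f 0"
      using add[OF xs x] f_xs f0 by (simp add: fun_eq_iff)
    then have "?xs + x = 0"
      using inj R_add[OF xs x] R0 by (simp add: inj_on_eq_iff)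
    then show ?thesis
      using 2 by (simp add: fun_eq_iff add_eq_0_iff)
  qed
qed

lemma right_ideal_iso_char_elem:
  assumes R: "right_ideal n R" and \<chi>: "linear_char n \<chi>"
    and iso: "right_module_iso n R (gen_right_ideal n (char_elem n \<chi>))"
    and x: "x \<in> R" and u: "u \<in> perms n"
  shows "x u = \<chi> u * x id"
proof -
  have "x \<in> group_ring n"
    using R x unfolding right_ideal_def by blast
  then have "x u = gr_mult n x (perm_basis (inv u)) id"
    by (simp add: gr_mult_perm_basis perms_inv u perms_inv_inv[OF u])
  also have "\<dots> = \<chi> u * x id"
    by (simp add: right_ideal_iso_mult_perm_basis[OF R \<chi> iso x perms_inv[OF u]]
        linear_char_inv[OF \<chi> u])
  finally show ?thesis .
qed

lemma young_sym_eq_char_elem_one: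
  assumes "row_group t = perms n" and "col_group t = {id}"
  shows "young_sym t = (char_elem n (\<lambda>_. 1) :: ('k::comm_ring_1) grpring)"
proof
  fix s
  have "{(p, q). p \<in> row_group t \<and> q \<in> col_group t \<and> p \<circ> q = s} = (if s \<in> perms n then {(s, id)} else {})"
    unfolding assms by auto
  then show "young_sym t s = char_elem n (\<lambda>_. 1) s"
    unfolding young_sym_def char_elem_def by simp
qed

lemma young_sym_eq_char_elem_sign:
  assumes "row_group t = {id}" and "col_group t = perms n"
  shows "young_sym t = (char_elem n (\<lambda>p. of_int (sign p)) :: ('k::comm_ring_1) grpring)"
proof
  fix s
  have "{(p, q). p \<in> row_group t \<and> q \<in> col_group t \<and> p \<circ> q = s} = (if s \<in> perms n then {(id, s)} else {})"
    unfolding assms by auto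
  then show "young_sym t s = char_elem n (\<lambda>p. of_int (sign p)) s"
    unfolding young_sym_def char_elem_def by simp
qed

lemma one_row_tableau_groups:
  assumes "tableau_of_shape n [n] t"
  shows "row_group t = perms n" and "col_group t = {id}"
proof -
  have "map length t = [n]" and d: "set (concat t) = {1..n}"
    using assms unfolding tableau_of_shape_def by auto
  then obtain l where t: "t = [l]" and ll: "length l = n"
    by (cases t) auto
  have sl: "set l = {1..n}" and lc: "length (concat t) = n"
    using d t ll by simp_all
  have "\<forall>i<length t. p ` set (t ! i) = set (t ! i)" if "p \<in> perms n" for p
    using that sl unfolding t perms_def by (simp add: permutes_image)
  then show "row_group t = perms n"
    unfolding row_group_def lc by blast
  have tc: "tab_col t j = (if j < n then {l ! j} else {})" for j
    unfolding tab_col_def t using ll by auto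
  have "q = id" if q: "q \<in> perms n" "\<forall>j. q ` tab_col t j = tab_col t j" for q
  proof (rule perms_eq_id[OF q(1)], intro ballI)
    fix x assume "x \<in> {1..n}"
    then obtain j where j: "j < n" "x = l ! j"
      using sl ll by (metis in_set_conv_nth)
    then show "q x = x"
      using q(2) tc[of j] by auto
  qed
  then show "col_group t = {id}"
    unfolding col_group_def lc by (auto simp: perms_id)
qed

lemma one_column_tableau_shape:
  assumes "tableau_of_shape n (replicate n 1) t"
  shows "length t = n" and "length (concat t) = n" and "\<And>i. i < n \<Longrightarrow> length (t ! i) = 1"
    and "{1..n} = {t ! i ! 0 | i. i < n}"
proof -
  have ml: "map length t = replicate n 1" and d: "set (concat t) = {1..n}"
    using assms unfolding tableau_of_shape_def by auto
  show lt: "length t = n"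
    using ml by (metis length_map length_replicate)
  have rows: "\<forall>r\<in>set t. length r = 1"
    using ml by (metis in_set_replicate image_eqI list.set_map)
  then show "length (t ! i) = 1" if "i < n" for i
    using that lt by simp
  have concat: "concat t = map (\<lambda>r. r ! 0) t"
    using rows by (induction t) (auto simp: length_Suc_conv)
  then show "length (concat t) = n"
    using lt by simp
  have "{1..n} = set (map (\<lambda>r. r ! 0) t)"
    using d concat by simp
  also have "\<dots> = {t ! i ! 0 | i. i < n}"
    using lt by (force simp: set_conv_nth)
  finally show "{1..n} = {t ! i ! 0 | i. i < n}" .
qed

lemma one_column_tableau_groups:
  assumes "tableau_of_shape n (replicate n 1) t"
  shows "row_group t = {id}" and "col_group t = perms n"
proof -
  note lt = one_column_tableau_shape(1)[OF assms] and lc = one_column_tableau_shape(2)[OF assms]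
    and row_len = one_column_tableau_shape(3)[OF assms]
    and entries = one_column_tableau_shape(4)[OF assms]
  have singleton: "set (t ! i) = {t ! i ! 0}" if "i < n" for i
    using row_len[OF that] by (cases "t ! i") auto
  have fixes_id: "p = id" if p: "p \<in> perms n" "\<forall>i<n. p ` set (t ! i) = set (t ! i)" for p
  proof (rule perms_eq_id[OF p(1)], intro ballI)
    fix x assume "x \<in> {1..n}"
    then obtain i where "i < n" "x = t ! i ! 0"
      using entries by blast
    then show "p x = x"
      using p(2) singleton by simp
  qed
  have "row_group t \<subseteq> {id}"
    using fixes_id unfolding row_group_def lc lt by blast
  moreover have "id \<in> row_group t"
    unfolding row_group_def by (simp add: perms_id)
  ultimately show "row_group t = {id}"
    by blast
  have "i < n \<and> j < length (t ! i) \<longleftrightarrow> i < n \<and> j = 0" for i j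
    using row_len[of i] by auto
  then have "tab_col t j = {t ! i ! j | i. i < n \<and> j = 0}" for j
    unfolding tab_col_def lt by presburger
  then have "tab_col t j = (if j = 0 then {1..n} else {})" for j
    unfolding entries by (cases "j = 0") simp_all
  then have "q ` tab_col t j = tab_col t j" if "q \<in> perms n" for q j
    using that unfolding perms_def by (simp add: permutes_image)
  then show "col_group t = perms n"
    unfolding col_group_def lc by blast
qed

lemma young_sym_one_row:
  assumes "tableau_of_shape n [n] t"
  shows "young_sym t = (char_elem n (\<lambda>_. 1) :: ('k::comm_ring_1) grpring)"
  by (rule young_sym_eq_char_elem_one[OF one_row_tableau_groups[OF assms]])

lemma young_sym_one_column:
  assumes "tableau_of_shape n (replicate n 1) t"
  shows "young_sym t = (char_elem n (\<lambda>p. of_int (sign p)) :: ('k::comm_ring_1) grpring)"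
  by (rule young_sym_eq_char_elem_sign[OF one_column_tableau_groups[OF assms]])

lemma act_compose_right:
  assumes \<chi>: "linear_char n \<chi>" and x: "\<And>u. u \<in> perms n \<Longrightarrow> x u = \<chi> u * x id"
    and \<tau>: "\<tau> \<in> perms n"
  shows "act n x T (v \<circ> \<tau>) = \<chi> \<tau> * act n x T v"
proof -
  have cancel: "inv \<tau> \<circ> (\<tau> \<circ> p) = p" for p
    by (simp add: comp_assoc[symmetric] perms_inv_o(2)[OF \<tau>])
  have "act n x T (v \<circ> \<tau>) = (\<Sum>p\<in>perms n. x (inv \<tau> \<circ> (\<tau> \<circ> p)) * T (v \<circ> (\<tau> \<circ> p)))"
    unfolding act_def cancel by (simp add: comp_assoc)
  also have "\<dots> = (\<Sum>q\<in>perms n. x (inv \<tau> \<circ> q) * T (v \<circ> q))"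
    by (rule sum_perms_compose_left[OF \<tau>])
  also have "\<dots> = (\<Sum>q\<in>perms n. \<chi> \<tau> * (x q * T (v \<circ> q)))"
  proof (rule sum.cong)
    fix q assume q: "q \<in> perms n"
    have "x (inv \<tau> \<circ> q) = \<chi> \<tau> * x q"
      using x[OF perms_compose[OF perms_inv[OF \<tau>] q]] x[OF q]
        linear_char_mult[OF \<chi> perms_inv[OF \<tau>] q] linear_char_inv[OF \<chi> \<tau>]
      by (simp add: mult.assoc)
    then show "x (inv \<tau> \<circ> q) * T (v \<circ> q) = \<chi> \<tau> * (x q * T (v \<circ> q))"
      by (simp add: mult.assoc)
  qed simp
  also have "\<dots> = \<chi> \<tau> * act n x T v"
    unfolding act_def by (simp add: sum_distrib_left)
  finally show ?thesis .
qed

lemma act_cong_args: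
  assumes T: "T \<in> tensors n" and vw: "\<forall>i\<in>{1..n}. v i = w i"
  shows "act n x T v = act n x T w"
  unfolding act_def
proof (rule sum.cong)
  fix p assume p: "p \<in> perms n"
  have "\<forall>i\<in>{1..n}. (v \<circ> p) i = (w \<circ> p) i"
    using vw permutes_in_image[of p "{1..n}"] p unfolding perms_def by simp
  then have "T (v \<circ> p) = T (w \<circ> p)"
    using T unfolding tensors_def by blast
  then show "x p * T (v \<circ> p) = x p * T (w \<circ> p)"
    by simp
qed simp

lemma symclass_cong_args:
  "T \<in> symclass n R \<Longrightarrow> \<forall>i\<in>{1..n}. v i = w i \<Longrightarrow> T v = T w"
  unfolding symclass_def using act_cong_args by blast

lemma symclass_compose_right:
  assumes R: "right_ideal n R" and \<chi>: "linear_char n \<chi>"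
    and iso: "right_module_iso n R (gen_right_ideal n (char_elem n \<chi>))"
    and T: "T \<in> symclass n R" and \<tau>: "\<tau> \<in> perms n"
  shows "T (v \<circ> \<tau>) = \<chi> \<tau> * T v"
proof -
  obtain x T0 where "T = act n x T0" and x: "x \<in> R"
    using T unfolding symclass_def by blast
  then show ?thesis
    using act_compose_right[OF \<chi> right_ideal_iso_char_elem[OF R \<chi> iso x] \<tau>] by simp
qed

lemma symclass_transpose:
  fixes R :: "'k::comm_ring_1 grpring set"
  assumes R: "right_ideal n R" and cls: "of_class n lam R" and lam: "lam = [n] \<or> lam = replicate n 1"
    and T: "T \<in> symclass n R" and ij: "i \<in> {1..n}" "j \<in> {1..n}" "i \<noteq> j"
  shows "T (v \<circ> transpose i j) = (if lam = [n] then 1 else -1) * T v"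
proof -
  obtain t where t: "tableau_of_shape n lam t"
    and iso: "right_module_iso n R (gen_right_ideal n (young_sym t))"
    using cls unfolding of_class_def by blast
  note swap = transpose_in_perms[OF ij(1,2)]
  show ?thesis
  proof (cases "lam = [n]")
    case True
    then have "young_sym t = (char_elem n (\<lambda>_. 1) :: 'k grpring)"
      using young_sym_one_row t by blast
    with iso have "right_module_iso n R (gen_right_ideal n (char_elem n (\<lambda>_. 1)))"
      by simp
    then show ?thesis
      using symclass_compose_right[OF R linear_char_one _ T swap] True by simp
  next
    case False
    then have "young_sym t = (char_elem n (\<lambda>p. of_int (sign p)) :: 'k grpring)"
      using young_sym_one_column t lam by blast
    with iso have "right_module_iso n R (gen_right_ideal n (char_elem n (\<lambda>p. of_int (sign p))))"
      by simp
    then show ?thesis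
      using symclass_compose_right[OF R linear_char_sign _ T swap] False ij(3)
      by (simp add: sign_swap_id)
  qed
qed

lemma act_star:
  fixes P :: "(nat \<Rightarrow> 'v) \<Rightarrow> 'k::comm_ring_1"
  shows "act n (star n a) P v = (\<Sum>s\<in>perms n. a s * P (v \<circ> inv s))"
proof -
  have "act n (star n a) P v = (\<Sum>s\<in>perms n. a (inv s) * P (v \<circ> inv (inv s)))"
    unfolding act_def star_def by (intro sum.cong) (simp_all add: perms_inv_inv)
  also have "\<dots> = (\<Sum>s\<in>perms n. a s * P (v \<circ> inv s))"
    by (rule sum_reindex_inv[OF subset_refl perms_inv])
  finally show ?thesis .
qed

lemma row_group_subset: "row_group t \<subseteq> perms (length (concat t))"
  unfolding row_group_def by blast

lemma col_group_subset: "col_group t \<subseteq> perms (length (concat t))"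
  unfolding col_group_def by blast

lemma sum_young_sym:
  fixes t :: "nat list list" and f :: "(nat \<Rightarrow> nat) \<Rightarrow> 'k::comm_ring_1"
  defines "n \<equiv> length (concat t)"
  shows "(\<Sum>s\<in>perms n. young_sym t s * f s)
    = (\<Sum>p\<in>row_group t. \<Sum>q\<in>col_group t. of_int (sign q) * f (p \<circ> q))"
proof -
  let ?H = "row_group t" and ?V = "col_group t"
  have H: "?H \<subseteq> perms n" and V: "?V \<subseteq> perms n"
    unfolding n_def by (rule row_group_subset, rule col_group_subset)
  then have fin: "finite (?H \<times> ?V)"
    using finite_subset perms_finite by blast
  have comp: "(\<lambda>x. fst x \<circ> snd x) ` (?H \<times> ?V) \<subseteq> perms n"
  proof (rule image_subsetI)
    fix x assume "x \<in> ?H \<times> ?V"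
    then have "fst x \<in> perms n" "snd x \<in> perms n"
      using H V by auto
    then show "fst x \<circ> snd x \<in> perms n"
      by (rule perms_compose)
  qed
  have "(\<Sum>s\<in>perms n. young_sym t s * f s)
      = (\<Sum>s\<in>perms n. \<Sum>x\<in>{x \<in> ?H \<times> ?V. fst x \<circ> snd x = s}. of_int (sign (snd x)) * f (fst x \<circ> snd x))"
    unfolding young_sym_def
    by (intro sum.cong refl) (auto simp: sum_distrib_right case_prod_beta intro!: sum.cong)
  also have "\<dots> = (\<Sum>x\<in>?H \<times> ?V. of_int (sign (snd x)) * f (fst x \<circ> snd x))"
    by (rule sum.group[OF fin perms_finite comp])
  also have "\<dots> = (\<Sum>p\<in>?H. \<Sum>q\<in>?V. of_int (sign q) * f (p \<circ> q))"
    by (simp add: sum.cartesian_product case_prod_beta)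
  finally show ?thesis .
qed

lemma perms_inv_image_eq:
  assumes p: "p \<in> perms n" and X: "p ` X = X"
  shows "inv p ` X = X"
proof -
  have "inv p ` X = (inv p \<circ> p) ` X"
    by (subst X[symmetric]) (rule image_comp)
  then show ?thesis
    using perms_inv_o(2)[OF p] by simp
qed

lemma row_group_inv:
  assumes "p \<in> row_group t"
  shows "inv p \<in> row_group t"
proof -
  have p: "p \<in> perms (length (concat t))" and "\<forall>i<length t. p ` set (t ! i) = set (t ! i)"
    using assms unfolding row_group_def by auto
  then show ?thesis
    unfolding row_group_def by (simp add: perms_inv perms_inv_image_eq[OF p])
qed

lemma col_group_inv:
  assumes "q \<in> col_group t"
  shows "inv q \<in> col_group t"
proof -
  have q: "q \<in> perms (length (concat t))" and "\<forall>j. q ` tab_col t j = tab_col t j"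
    using assms unfolding col_group_def by auto
  then show ?thesis
    unfolding col_group_def by (simp add: perms_inv perms_inv_image_eq[OF q])
qed

lemma act_star_young_sym:
  fixes t :: "nat list list" and P :: "(nat \<Rightarrow> 'v) \<Rightarrow> 'k::comm_ring_1"
  defines "n \<equiv> length (concat t)"
  shows "act n (star n (young_sym t)) P v
    = (\<Sum>p\<in>row_group t. \<Sum>q\<in>col_group t. of_int (sign q) * P (v \<circ> q \<circ> p))"
proof -
  let ?H = "row_group t" and ?V = "col_group t"
  have inv_compose: "inv (p \<circ> q) = inv q \<circ> inv p" if "p \<in> ?H" "q \<in> ?V" for p q
    using that row_group_subset[of t] col_group_subset[of t]
    by (intro o_inv_distrib perms_bij) auto
  have sign_inv: "sign (inv q) = sign q" if "q \<in> ?V" for q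
    using that col_group_subset by (auto intro: sign_inverse perms_permutation)
  have "act n (star n (young_sym t)) P v
      = (\<Sum>p\<in>?H. \<Sum>q\<in>?V. of_int (sign q) * P (v \<circ> inv (p \<circ> q)))"
    unfolding act_star n_def by (rule sum_young_sym)
  also have "\<dots> = (\<Sum>p\<in>?H. \<Sum>q\<in>?V. of_int (sign (inv q)) * P (v \<circ> inv q \<circ> inv p))"
    by (intro sum.cong refl) (simp add: inv_compose sign_inv comp_assoc)
  also have "\<dots> = (\<Sum>p\<in>?H. \<Sum>q\<in>?V. of_int (sign q) * P (v \<circ> q \<circ> inv p))"
    by (intro sum.cong refl sum_reindex_inv[OF col_group_subset col_group_inv])
  also have "\<dots> = (\<Sum>p\<in>?H. \<Sum>q\<in>?V. of_int (sign q) * P (v \<circ> q \<circ> p))"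
    by (rule sum_reindex_inv[OF row_group_subset row_group_inv])
  finally show ?thesis .
qed

lemma restrict_id_compose_disjoint:
  assumes \<sigma>: "\<sigma> permutes A" and \<tau>: "\<tau> permutes B" and AB: "A \<inter> B = {}"
  shows "restrict_id (\<sigma> \<circ> \<tau>) A = \<sigma>" and "restrict_id (\<sigma> \<circ> \<tau>) B = \<tau>"
proof -
  have "\<tau> x = x" if "x \<in> A" for x
    using that AB permutes_not_in[OF \<tau>] by blast
  then show "restrict_id (\<sigma> \<circ> \<tau>) A = \<sigma>"
    using permutes_not_in[OF \<sigma>] by (auto simp: restrict_id_def)
  have "\<sigma> (\<tau> x) = \<tau> x" if "x \<in> B" for x
    using that AB permutes_in_image[OF \<tau>] permutes_not_in[OF \<sigma>] by blast
  then show "restrict_id (\<sigma> \<circ> \<tau>) B = \<tau>"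
    using permutes_not_in[OF \<tau>] by (auto simp: restrict_id_def)
qed

lemma sum_permutes_stabilizing:
  assumes AB: "A \<inter> B = {}"
  shows "(\<Sum>p\<in>{p. p permutes (A \<union> B) \<and> p ` A = A \<and> p ` B = B}. g p)
       = (\<Sum>\<sigma>\<in>{\<sigma>. \<sigma> permutes A}. \<Sum>\<tau>\<in>{\<tau>. \<tau> permutes B}. g (\<sigma> \<circ> \<tau>))"
proof -
  let ?S = "{\<sigma>. \<sigma> permutes A} \<times> {\<tau>. \<tau> permutes B}"
  let ?T = "{p. p permutes (A \<union> B) \<and> p ` A = A \<and> p ` B = B}"
  have "(\<Sum>x\<in>?S. g (fst x \<circ> snd x)) = (\<Sum>p\<in>?T. g p)"
  proof (rule sum.reindex_bij_witness[where i="\<lambda>p. (restrict_id p A, restrict_id p B)"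
        and j="\<lambda>x. fst x \<circ> snd x"])
    fix x assume "x \<in> ?S"
    then have \<sigma>: "fst x permutes A" and \<tau>: "snd x permutes B"
      by auto
    show "(restrict_id (fst x \<circ> snd x) A, restrict_id (fst x \<circ> snd x) B) = x"
      using restrict_id_compose_disjoint[OF \<sigma> \<tau> AB] by simp
    have "fst x \<circ> snd x permutes A \<union> B"
      using permutes_compose[OF permutes_subset[OF \<tau>] permutes_subset[OF \<sigma>]] by blast
    moreover have "(fst x \<circ> snd x) ` A = A" "(fst x \<circ> snd x) ` B = B"
      using permutes_image[OF permutes_subset[OF \<sigma>, of "A \<union> B"]]
        restrict_id_compose_disjoint[OF \<sigma> \<tau> AB] permutes_image[OF \<sigma>] permutes_image[OF \<tau>]
      by (metis image_cong restrict_id_simps(1))+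
    ultimately show "fst x \<circ> snd x \<in> ?T"
      by blast
  next
    fix p assume "p \<in> ?T"
    then have p: "p permutes A \<union> B" and pA: "p ` A = A" and pB: "p ` B = B"
      by auto
    have "bij_betw p A A" "bij_betw p B B"
      using pA pB permutes_inj[OF p] by (auto simp: bij_betw_def intro: inj_on_subset)
    then have "restrict_id p A permutes A" "restrict_id p B permutes B"
      by (auto intro: permutes_restrict_id)
    then show "(restrict_id p A, restrict_id p B) \<in> ?S"
      by simp
    have "restrict_id p A (restrict_id p B x) = p x" for x
      using AB pB permutes_not_in[OF p, of x] by (auto simp: restrict_id_def)
    then show "fst (restrict_id p A, restrict_id p B) \<circ> snd (restrict_id p A, restrict_id p B) = p"
      by auto
  qed simp
  then show ?thesis
    by (simp add: sum.cartesian_product case_prod_beta)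
qed

lemma row_group_t':
  "row_group t' = {p. p permutes ({1,3,5} \<union> {2,4}) \<and> p ` {1,3,5} = {1,3,5} \<and> p ` {2,4} = {2,4}}"
proof -
  have lengths: "length (concat t') = 5" "length t' = 2"
    by (simp_all add: t'_def)
  have five: "{1..5::nat} = {1,3,5} \<union> {2,4}"
    by auto
  have rows: "(\<forall>i<2. p ` set (t' ! i) = set (t' ! i)) \<longleftrightarrow> p ` {1,3,5} = {1,3,5} \<and> p ` {2,4} = {2,4}" for p
    by (auto simp: t'_def less_2_cases_iff)
  show ?thesis
    unfolding row_group_def perms_def lengths five rows by blast
qed

lemma tab_col_t':
  "tab_col t' j = (if j = 0 then {1,2} else if j = 1 then {3,4} else if j = 2 then {5} else {})"
proof -
  have ex2: "(\<exists>i. i < 2 \<and> P i) \<longleftrightarrow> P 0 \<or> P 1" for P :: "nat \<Rightarrow> bool"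
    by (auto simp: less_2_cases_iff)
  have len: "length t' = 2"
    by (simp add: t'_def)
  have "tab_col t' j = {x. \<exists>i. i < 2 \<and> x = t' ! i ! j \<and> j < length (t' ! i)}"
    unfolding tab_col_def len by blast
  also have "\<dots> = {x. (x = [1,3,5] ! j \<and> j < length [1,3,5::nat]) \<or> (x = [2,4] ! j \<and> j < length [2,4::nat])}"
    unfolding ex2 by (simp add: t'_def)
  finally have "tab_col t' j = {x. (x = [1,3,5] ! j \<and> j < length [1,3,5::nat]) \<or> (x = [2,4] ! j \<and> j < length [2,4::nat])}" .
  moreover consider "j = 0" | "j = 1" | "j = 2" | "j \<ge> 3"
    by linarith
  ultimately show ?thesis
    by cases auto
qed

lemma col_group_t':
  "col_group t' = {q. q permutes ({1,2} \<union> {3,4}) \<and> q ` {1,2} = {1,2} \<and> q ` {3,4} = {3,4}}"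
proof -
  have cols: "(\<forall>j. q ` tab_col t' j = tab_col t' j) \<longleftrightarrow> q ` {1,2} = {1,2} \<and> q ` {3,4} = {3,4} \<and> q 5 = 5"
    for q :: "nat \<Rightarrow> nat"
  proof
    assume "\<forall>j. q ` tab_col t' j = tab_col t' j"
    from this[rule_format, of 0] this[rule_format, of 1] this[rule_format, of 2]
    show "q ` {1,2} = {1,2} \<and> q ` {3,4} = {3,4} \<and> q 5 = 5"
      by (simp add: tab_col_t')
  qed (simp add: tab_col_t')
  have fixes_5: "q permutes {1..5} \<and> q 5 = 5 \<longleftrightarrow> q permutes ({1,2} \<union> {3,4})" for q :: "nat \<Rightarrow> nat"
  proof
    assume q: "q permutes {1..5} \<and> q 5 = 5"
    have "{1..5} - ({1,2} \<union> {3,4}) = {5::nat}"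
      by auto
    with q show "q permutes ({1,2} \<union> {3,4})"
      using permutes_superset[of q "{1..5}" "{1,2} \<union> {3,4}"] by auto
  next
    assume q: "q permutes ({1,2} \<union> {3,4})"
    then show "q permutes {1..5} \<and> q 5 = 5"
      using permutes_subset[OF q, of "{1..5}"] permutes_not_in[OF q, of 5] by auto
  qed
  have len: "length (concat t') = 5"
    by (simp add: t'_def)
  show ?thesis
  proof (rule set_eqI)
    fix q
    show "q \<in> col_group t' \<longleftrightarrow>
        q \<in> {q. q permutes ({1,2} \<union> {3,4}) \<and> q ` {1,2} = {1,2} \<and> q ` {3,4} = {3,4}}"
      unfolding col_group_def len cols perms_def mem_Collect_eq fixes_5[symmetric] by blast
  qed
qed

lemma act_star_young_sym_t':
  fixes P :: "(nat \<Rightarrow> 'v) \<Rightarrow> 'k::comm_ring_1"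
  shows "act 5 (star 5 (young_sym t')) P v =
    (\<Sum>\<sigma>\<in>{\<sigma>. \<sigma> permutes {1,3,5::nat}}. \<Sum>\<tau>\<in>{\<tau>. \<tau> permutes {2,4::nat}}.
     \<Sum>\<alpha>\<in>{\<alpha>. \<alpha> permutes {1,2::nat}}. \<Sum>\<beta>\<in>{\<beta>. \<beta> permutes {3,4::nat}}.
     of_int (sign (\<alpha> \<circ> \<beta>)) * P (v \<circ> (\<alpha> \<circ> \<beta>) \<circ> (\<sigma> \<circ> \<tau>)))"
proof -
  have "length (concat t') = 5"
    by (simp add: t'_def)
  then have "act 5 (star 5 (young_sym t')) P v =
     (\<Sum>p\<in>row_group t'. \<Sum>q\<in>col_group t'. of_int (sign q) * P (v \<circ> q \<circ> p))"
    using act_star_young_sym[of t' P v] by simp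
  also have "\<dots> = (\<Sum>\<sigma>\<in>{\<sigma>. \<sigma> permutes {1,3,5::nat}}. \<Sum>\<tau>\<in>{\<tau>. \<tau> permutes {2,4::nat}}.
      \<Sum>q\<in>col_group t'. of_int (sign q) * P (v \<circ> q \<circ> (\<sigma> \<circ> \<tau>)))"
    unfolding row_group_t' by (rule sum_permutes_stabilizing) auto
  also have "\<dots> = (\<Sum>\<sigma>\<in>{\<sigma>. \<sigma> permutes {1,3,5::nat}}. \<Sum>\<tau>\<in>{\<tau>. \<tau> permutes {2,4::nat}}.
     \<Sum>\<alpha>\<in>{\<alpha>. \<alpha> permutes {1,2::nat}}. \<Sum>\<beta>\<in>{\<beta>. \<beta> permutes {3,4::nat}}.
     of_int (sign (\<alpha> \<circ> \<beta>)) * P (v \<circ> (\<alpha> \<circ> \<beta>) \<circ> (\<sigma> \<circ> \<tau>)))"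
    unfolding col_group_t' by (subst sum_permutes_stabilizing) auto
  finally show ?thesis .
qed

text \<open>Expanding the row symmetrization and column antisymmetrization gives 48 terms; the
  swap rules, oriented towards increasing argument indices, bring them to a normal form in
  which they cancel.\<close>
lemma act_star_young_sym_t'_products_eq_0:
  fixes f :: "'v \<Rightarrow> 'v \<Rightarrow> 'k::comm_ring_1" and g :: "'v \<Rightarrow> 'v \<Rightarrow> 'v \<Rightarrow> 'k"
  assumes f_swap: "\<And>a b. f a b = ef * f b a"
    and g_swap12: "\<And>a b c. g a b c = eg * g b a c"
    and g_swap23: "\<And>a b c. g a b c = eg * g a c b"
    and signs: "(ef = 1 \<and> eg = -1) \<or> (ef = -1 \<and> eg = 1) \<or> (ef = -1 \<and> eg = -1)"
  shows "act 5 (star 5 (young_sym t')) (\<lambda>w. f (w 1) (w 2) * g (w 3) (w 4) (w 5)) = 0"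
    and "act 5 (star 5 (young_sym t')) (\<lambda>w. g (w 1) (w 2) (w 3) * f (w 4) (w 5)) = 0"
proof -
  have vanish: "act 5 (star 5 (young_sym t')) (\<lambda>w. f (w 1) (w 2) * g (w 3) (w 4) (w 5)) v = 0 \<and>
      act 5 (star 5 (young_sym t')) (\<lambda>w. g (w 1) (w 2) (w 3) * f (w 4) (w 5)) v = 0" for v
  proof -
    have f_sort: "j < i \<Longrightarrow> f (v i) (v j) = ef * f (v j) (v i)" for i j :: nat
      by (rule f_swap)
    have g_sort12: "j < i \<Longrightarrow> g (v i) (v j) (v k) = eg * g (v j) (v i) (v k)" for i j k :: nat
      by (rule g_swap12)
    have g_sort23: "k < j \<Longrightarrow> g (v i) (v j) (v k) = eg * g (v i) (v k) (v j)" for i j k :: nat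
      by (rule g_swap23)
    show ?thesis
      by (simp add: act_star_young_sym_t' sum_over_permutations_insert sign_compose sign_swap_id
          permutation_swap_id permutation_compose)
        (use signs in \<open>elim disjE conjE; simp add: f_sort g_sort12 g_sort23\<close>)
  qed
  then show "act 5 (star 5 (young_sym t')) (\<lambda>w. f (w 1) (w 2) * g (w 3) (w 4) (w 5)) = 0"
    and "act 5 (star 5 (young_sym t')) (\<lambda>w. g (w 1) (w 2) (w 3) * f (w 4) (w 5)) = 0"
    by (simp_all add: fun_eq_iff)
qed

lemma partition_of_2: "partition_of 2 lam \<Longrightarrow> lam = [2] \<or> lam = [1,1]"
  unfolding partition_of_def
  apply (cases lam; simp)
  subgoal for a l by (cases l; cases "tl l"; auto)
  done

lemma partition_of_3: "partition_of 3 lam \<Longrightarrow> lam = [3] \<or> lam = [2,1] \<or> lam = [1,1,1]"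
  unfolding partition_of_def
  apply (cases lam; simp)
  subgoal for a l by (cases l; cases "tl l"; cases "tl (tl l)"; auto)
  done

lemma atLeastAtMost_1_2: "{1..2::nat} = {1, 2}"
  by auto

lemma atLeastAtMost_1_3: "{1..3::nat} = {1, 2, 3}"
  by auto

lemma binary_form:
  fixes T :: "(nat \<Rightarrow> 'v) \<Rightarrow> 'k::comm_ring_1"
  assumes local: "\<And>v w. \<forall>i\<in>{1..2}. v i = w i \<Longrightarrow> T v = T w"
    and swap: "\<And>v. T (v \<circ> transpose 1 2) = e * T v"
  obtains t2 where "\<And>w. T w = t2 (w 1) (w 2)" and "\<And>a b. t2 a b = e * t2 b a"
proof
  let ?t2 = "\<lambda>a b. T (\<lambda>i. if i = 1 then a else b)"
  show "T w = ?t2 (w 1) (w 2)" for w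
    by (rule local) (unfold atLeastAtMost_1_2, simp)
  have flip: "?t2 a b = T ((\<lambda>i. if i = 1 then b else a) \<circ> transpose 1 2)" for a b
    by (rule local) (unfold atLeastAtMost_1_2, simp)
  show "?t2 a b = e * ?t2 b a" for a b
    unfolding flip[of a b] by (rule swap)
qed

lemma ternary_form:
  fixes T :: "(nat \<Rightarrow> 'v) \<Rightarrow> 'k::comm_ring_1"
  assumes local: "\<And>v w. \<forall>i\<in>{1..3}. v i = w i \<Longrightarrow> T v = T w"
    and swap12: "\<And>v. T (v \<circ> transpose 1 2) = e * T v"
    and swap23: "\<And>v. T (v \<circ> transpose 2 3) = e * T v"
  obtains t3 where "\<And>w. T w = t3 (w 1) (w 2) (w 3)"
    and "\<And>a b c. t3 a b c = e * t3 b a c" and "\<And>a b c. t3 a b c = e * t3 a c b"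
proof
  let ?t3 = "\<lambda>a b c. T (\<lambda>i. if i = 1 then a else if i = 2 then b else c)"
  show "T w = ?t3 (w 1) (w 2) (w 3)" for w
    by (rule local) (unfold atLeastAtMost_1_3, simp)
  have flip12: "?t3 a b c = T ((\<lambda>i. if i = 1 then b else if i = 2 then a else c) \<circ> transpose 1 2)"
    for a b c
    by (rule local) (unfold atLeastAtMost_1_3, simp)
  show "?t3 a b c = e * ?t3 b a c" for a b c
    unfolding flip12[of a b c] by (rule swap12)
  have flip23: "?t3 a b c = T ((\<lambda>i. if i = 1 then a else if i = 2 then c else b) \<circ> transpose 2 3)"
    for a b c
    by (rule local) (unfold atLeastAtMost_1_3, simp)
  show "?t3 a b c = e * ?t3 a c b" for a b c
    unfolding flip23[of a b c] by (rule swap23)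
qed

lemma minimal_right_ideal_right_ideal: "minimal_right_ideal n R \<Longrightarrow> right_ideal n R"
  unfolding minimal_right_ideal_def by blast

lemma young_sym_t'_annihilates_products:
  fixes R Rh :: "('k::comm_ring_1) grpring set" and T Th :: "(nat \<Rightarrow> 'n::finite \<Rightarrow> 'k) \<Rightarrow> 'k"
  assumes lam: "partition_of 2 lam" and lamh: "partition_of 3 lamh"
    and exceptions: "(lam, lamh) \<notin> {([2],[3]), ([2],[2,1]), ([1,1],[2,1])}"
    and R: "right_ideal 2 R" "of_class 2 lam R"
    and Rh: "right_ideal 3 Rh" "of_class 3 lamh Rh"
    and T: "T \<in> symclass 2 R" and Th: "Th \<in> symclass 3 Rh"
  shows "act 5 (star 5 (young_sym t')) (tprod23 T Th) = 0 \<and>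
         act 5 (star 5 (young_sym t')) (tprod32 Th T) = 0"
proof -
  have lam_cases: "lam = [2] \<or> lam = replicate 2 1"
    using partition_of_2[OF lam] by (simp add: numeral_2_eq_2)
  have lamh_cases: "lamh = [3] \<or> lamh = replicate 3 1"
    using partition_of_3[OF lamh] partition_of_2[OF lam] exceptions by (auto simp: numeral_3_eq_3)
  define e2 where "e2 = (if lam = [2] then 1 else -1 :: 'k)"
  define e3 where "e3 = (if lamh = [3] then 1 else -1 :: 'k)"
  have T_swap: "T (v \<circ> transpose 1 2) = e2 * T v" for v
    unfolding e2_def by (rule symclass_transpose[OF R lam_cases T]) auto
  have Th_swaps: "Th (v \<circ> transpose 1 2) = e3 * Th v" "Th (v \<circ> transpose 2 3) = e3 * Th v" for v
    unfolding e3_def by (rule symclass_transpose[OF Rh lamh_cases Th]; simp)+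
  obtain t2 where T_eq: "\<And>w. T w = t2 (w 1) (w 2)" and t2_swap: "\<And>a b. t2 a b = e2 * t2 b a"
    using binary_form[where T = T, OF symclass_cong_args[OF T] T_swap] by blast
  obtain t3 where Th_eq: "\<And>w. Th w = t3 (w 1) (w 2) (w 3)"
    and t3_swaps: "\<And>a b c. t3 a b c = e3 * t3 b a c" "\<And>a b c. t3 a b c = e3 * t3 a c b"
    using ternary_form[where T = Th, OF symclass_cong_args[OF Th] Th_swaps] by blast
  have signs: "(e2 = 1 \<and> e3 = -1) \<or> (e2 = -1 \<and> e3 = 1) \<or> (e2 = -1 \<and> e3 = -1)"
    using lam_cases lamh_cases exceptions unfolding e2_def e3_def by auto
  have "tprod23 T Th = (\<lambda>w. t2 (w 1) (w 2) * t3 (w 3) (w 4) (w 5))"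
    and "tprod32 Th T = (\<lambda>w. t3 (w 1) (w 2) (w 3) * t2 (w 4) (w 5))"
    by (simp_all add: tprod23_def tprod32_def T_eq Th_eq eval_nat_numeral)
  then show ?thesis
    using act_star_young_sym_t'_products_eq_0[where f = t2 and g = t3, OF t2_swap t3_swaps signs] by simp
qed

theorem theorem1p8:
  shows "(\<forall>lam lamh (R :: real grpring set) (Rh :: real grpring set).
            partition_of 2 lam \<and> partition_of 3 lamh \<and>
            (lam, lamh) \<notin> {([2],[3]), ([2],[2,1]), ([1,1],[2,1])} \<and>
            minimal_right_ideal 2 R \<and> of_class 2 lam R \<and>
            minimal_right_ideal 3 Rh \<and> of_class 3 lamh Rh \<longrightarrow>
            (\<forall>T \<in> (symclass 2 R :: ((nat \<Rightarrow> 'n::finite \<Rightarrow> real) \<Rightarrow> real) set).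
             \<forall>Th \<in> (symclass 3 Rh :: ((nat \<Rightarrow> 'n \<Rightarrow> real) \<Rightarrow> real) set).
               act 5 (star 5 (young_sym t')) (tprod23 T Th) = 0 \<and>
               act 5 (star 5 (young_sym t')) (tprod32 Th T) = 0))
       \<and>
         (\<forall>lam lamh (R :: complex grpring set) (Rh :: complex grpring set).
            partition_of 2 lam \<and> partition_of 3 lamh \<and>
            (lam, lamh) \<notin> {([2],[3]), ([2],[2,1]), ([1,1],[2,1])} \<and>
            minimal_right_ideal 2 R \<and> of_class 2 lam R \<and>
            minimal_right_ideal 3 Rh \<and> of_class 3 lamh Rh \<longrightarrow>
            (\<forall>T \<in> (symclass 2 R :: ((nat \<Rightarrow> 'n \<Rightarrow> complex) \<Rightarrow> complex) set).
             \<forall>Th \<in> (symclass 3 Rh :: ((nat \<Rightarrow> 'n \<Rightarrow> complex) \<Rightarrow> complex) set).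
               act 5 (star 5 (young_sym t')) (tprod23 T Th) = 0 \<and>
               act 5 (star 5 (young_sym t')) (tprod32 Th T) = 0))"
  using young_sym_t'_annihilates_products[where 'k = real,
      OF _ _ _ minimal_right_ideal_right_ideal _ minimal_right_ideal_right_ideal]
    young_sym_t'_annihilates_products[where 'k = complex,
      OF _ _ _ minimal_right_ideal_right_ideal _ minimal_right_ideal_right_ideal]
  by blast

end
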